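(* Let $R$ be a ring and $S$ a (left and right) Ore set in $R$. Then: (1) $\mathcal J(R,S)\neq\emptyset$; (2) $\mathfrak p(S)$ is the least element (w.r.t. inclusion) of $\mathcal J(R,S)$; (3) if, in addition, $S$ is a left and right denominator set with $\mathrm{ass}(S)=\mathfrak a$, then $\mathfrak p(S)=\mathfrak a$.
   Context: Rings are associative with $1$. A multiplicatively closed subset $S$ ($1\in S$, $0\notin S$) is an Ore set if $Sr\cap Rs\ne\emptyset$ and $rS\cap sR\ne\emptyset$ for all $r\in R,s\in S$. It is a (left and right) denominator set if moreover $rs=0$ ($s\in S$) implies $tr=0$ for some $t\in S$, and $sr=0$ implies $rt=0$ for some $t\in S$; then $\mathrm{ass}(S):=\{r\mid sr=0 \text{ for some } s\in S\}$. For a ring $B$ and $T\subseteq B$, $\mathrm{ass}_l(T,B):=\{b\mid tb=0\text{ for some }t\in T\}$, $\mathrm{ass}_r(T,B):=\{b\mid bt=0\text{ for some }t\in T\}$. Define ideals $\mathfrak p_\alpha$ ($\alpha\ge1$ ordinals): $\mathfrak p_1:=\mathrm{ass}_l(S,R)+\mathrm{ass}_r(S,R)$; $\mathfrak p_{\alpha+1}:=\pi_\alpha^{-1}(\mathrm{ass}_l(\pi_\alpha(S),R/\mathfrak p_\alpha)+\mathrm{ass}_r(\pi_\alpha(S),R/\mathfrak p_\alpha))$ with $\pi_\alpha:R\to R/\mathfrak p_\alpha$ canonical; $\mathfrak p_\alpha:=\bigcup_{\beta<\alpha}\mathfrak p_\beta$ for limit $\alpha$; $\mathfrak p(S):=\bigcup_\alpha\mathfrak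 p_\alpha$. $\mathcal J(R,S)$ is the set of ideals $\mathfrak b$ of $R$ such that $\pi_{\mathfrak b}(S)$ is a (left and right) denominator set of $R/\mathfrak b$ with $\mathrm{ass}(\pi_{\mathfrak b}(S))=0$, $\pi_{\mathfrak b}:R\to R/\mathfrak b$ canonical. *)

theory Defs
  imports Main
begin

text \<open>The quotient ring R/b is represented via the
  congruence x \<equiv> y (mod b) iff x - y \<in> b; thus "pi_b(x) = pi_b(y)" is
  written "x - y \<in> b" and "pi_b(x) = 0" is written "x \<in> b".\<close>

definition two_sided_ideal :: "'a::ring_1 set \<Rightarrow> bool" where
  "two_sided_ideal I \<longleftrightarrow> 0 \<in> I \<and> (\<forall>x\<in>I. \<forall>y\<in>I. x + y \<in> I) \<and> (\<forall>x\<in>I. - x \<in> I)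
     \<and> (\<forall>x\<in>I. \<forall>r. r * x \<in> I \<and> x * r \<in> I)"

definition mult_closed :: "'a::ring_1 set \<Rightarrow> bool" where
  "mult_closed S \<longleftrightarrow> 1 \<in> S \<and> 0 \<notin> S \<and> (\<forall>s\<in>S. \<forall>t\<in>S. s * t \<in> S)"

definition ore_set :: "'a::ring_1 set \<Rightarrow> bool" where
  "ore_set S \<longleftrightarrow> mult_closed S \<and>
     (\<forall>r. \<forall>s\<in>S. (\<exists>s'\<in>S. \<exists>r'. s' * r = r' * s) \<and> (\<exists>s'\<in>S. \<exists>r'. r * s' = s * r'))"

definition denominator_set :: "'a::ring_1 set \<Rightarrow> bool" where
  "denominator_set S \<longleftrightarrow> ore_set S \<and>
     (\<forall>r. \<forall>s\<in>S. r * s = 0 \<longrightarrow> (\<exists>t\<in>S. t * r = 0)) \<and>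
     (\<forall>r. \<forall>s\<in>S. s * r = 0 \<longrightarrow> (\<exists>t\<in>S. r * t = 0))"

definition ass :: "'a::ring_1 set \<Rightarrow> 'a set" where
  "ass S = {r. \<exists>s\<in>S. s * r = 0}"

definition ore_set_mod :: "'a::ring_1 set \<Rightarrow> 'a set \<Rightarrow> bool" where
  "ore_set_mod b S \<longleftrightarrow>
     \<comment> \<open>1 \<in> pi_b(S) and multiplicative closedness are inherited from S; 0 \<notin> pi_b(S):\<close>
     1 \<in> S \<and> (\<forall>s\<in>S. \<forall>t\<in>S. s * t \<in> S) \<and> (\<forall>s\<in>S. s \<notin> b) \<and>
     (\<forall>r. \<forall>s\<in>S. (\<exists>s'\<in>S. \<exists>r'. s' * r - r' * s \<in> b) \<and> (\<exists>s'\<in>S. \<exists>r'. r * s' - s * r' \<in> b))"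

definition denominator_set_mod :: "'a::ring_1 set \<Rightarrow> 'a set \<Rightarrow> bool" where
  "denominator_set_mod b S \<longleftrightarrow> ore_set_mod b S \<and>
     (\<forall>r. \<forall>s\<in>S. r * s \<in> b \<longrightarrow> (\<exists>t\<in>S. t * r \<in> b)) \<and>
     (\<forall>r. \<forall>s\<in>S. s * r \<in> b \<longrightarrow> (\<exists>t\<in>S. r * t \<in> b))"

definition ass_mod_zero :: "'a::ring_1 set \<Rightarrow> 'a set \<Rightarrow> bool" where
  "ass_mod_zero b S \<longleftrightarrow> (\<forall>r. \<forall>s\<in>S. s * r \<in> b \<longrightarrow> r \<in> b)"

definition JRS :: "'a::ring_1 set \<Rightarrow> 'a set set" where
  "JRS S = {b. two_sided_ideal b \<and> denominator_set_mod b S \<and> ass_mod_zero b S}"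

definition ass_l :: "'a::ring_1 set \<Rightarrow> 'a set" where
  "ass_l S = {r. \<exists>s\<in>S. s * r = 0}"

definition ass_r :: "'a::ring_1 set \<Rightarrow> 'a set" where
  "ass_r S = {r. \<exists>s\<in>S. r * s = 0}"

definition set_plus :: "'a::ring_1 set \<Rightarrow> 'a set \<Rightarrow> 'a set" where
  "set_plus A B = {a + c | a c. a \<in> A \<and> c \<in> B}"

definition p1 :: "'a::ring_1 set \<Rightarrow> 'a set" where
  "p1 S = set_plus (ass_l S) (ass_r S)"

text \<open>Successor step: p_{alpha+1} = pi^{-1}(ass_l(pi S, R/p) + ass_r(pi S, R/p)) with p = p_alpha.\<close>
definition p_succ :: "'a::ring_1 set \<Rightarrow> 'a set \<Rightarrow> 'a set" where
  "p_succ S p = {x. \<exists>a c. x - (a + c) \<in> p \<and> (\<exists>s\<in>S. s * a \<in> p) \<and> (\<exists>s\<in>S. c * s \<in> p)}"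

text \<open>The transfinite sequence p_alpha (alpha \<ge> 1), represented as the set of its
  stages: the least family containing p_1, closed under the successor step and
  under unions (limit stages). p(S) is the union of all stages.\<close>
inductive_set p_stages :: "'a::ring_1 set \<Rightarrow> 'a set set" for S :: "'a set" where
  base: "p1 S \<in> p_stages S"
| succ: "p \<in> p_stages S \<Longrightarrow> p_succ S p \<in> p_stages S"
| lim: "M \<in> Pow (p_stages S) \<Longrightarrow> M \<noteq> {} \<Longrightarrow> \<Union>M \<in> p_stages S"
  monos Pow_mono

definition pS :: "'a::ring_1 set \<Rightarrow> 'a set" where
  "pS S = \<Union>(p_stages S)"

end

theory Submission
  imports Defs "HOL-Library.Bourbaki_Witt_Fixpoint"
begin

text \<open>For an Ore set \<open>S\<close> and an ideal \<open>b\<close>, the preimages \<open>ass_l_mod b S\<close> and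
  \<open>ass_r_mod b S\<close> of \<open>ass\<^sub>l(\<pi> S, R/b)\<close> and \<open>ass\<^sub>r(\<pi> S, R/b)\<close> are two-sided ideals
  containing \<open>b\<close>, and the successor step is their sum.  Hence every stage is an ideal
  disjoint from \<open>S\<close>; as the successor step is inflationary on the stages, they form a
  Bourbaki-Witt tower and in particular a chain.  So \<open>\<pfrak>(S)\<close> is an ideal disjoint from \<open>S\<close>
  from which elements of \<open>S\<close> cancel on either side.  Such an ideal lies in \<open>\<J>(R,S)\<close>, the Ore
  conditions passing to every quotient; conversely every \<open>\<bfrak> \<in> \<J>(R,S)\<close> absorbs the successor
  step of each smaller ideal, so \<open>\<pfrak>(S) \<subseteq> \<bfrak>\<close> by transfinite induction.  For a denominator
  set, \<open>ass(S)\<close> is again such an ideal and is contained in \<open>\<pfrak>\<^sub>1\<close>.\<close>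

definition ass_l_mod :: "'a::ring_1 set \<Rightarrow> 'a set \<Rightarrow> 'a set" where
  "ass_l_mod b S = {r. \<exists>s\<in>S. s * r \<in> b}"

definition ass_r_mod :: "'a::ring_1 set \<Rightarrow> 'a set \<Rightarrow> 'a set" where
  "ass_r_mod b S = {r. \<exists>s\<in>S. r * s \<in> b}"

lemma
  assumes "two_sided_ideal I"
  shows two_sided_ideal_zero: "0 \<in> I"
    and two_sided_ideal_add: "x \<in> I \<Longrightarrow> y \<in> I \<Longrightarrow> x + y \<in> I"
    and two_sided_ideal_uminus: "x \<in> I \<Longrightarrow> - x \<in> I"
    and two_sided_ideal_mult_left: "x \<in> I \<Longrightarrow> r * x \<in> I"
    and two_sided_ideal_mult_right: "x \<in> I \<Longrightarrow> x * r \<in> I"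
  using assms by (auto simp: two_sided_ideal_def)

lemma two_sided_idealI:
  assumes "0 \<in> I" and "\<And>x y. x \<in> I \<Longrightarrow> y \<in> I \<Longrightarrow> x + y \<in> I" and "\<And>x. x \<in> I \<Longrightarrow> - x \<in> I"
    and "\<And>x r. x \<in> I \<Longrightarrow> r * x \<in> I" and "\<And>x r. x \<in> I \<Longrightarrow> x * r \<in> I"
  shows "two_sided_ideal I"
  using assms by (simp add: two_sided_ideal_def)

lemma two_sided_ideal_singleton_zero: "two_sided_ideal {0}"
  by (simp add: two_sided_ideal_def)

lemma two_sided_ideal_set_plus:
  assumes I: "two_sided_ideal I" and J: "two_sided_ideal J"
  shows "two_sided_ideal (set_plus I J)"
proof (rule two_sided_idealI)
  show "0 \<in> set_plus I J"
    unfolding set_plus_def using two_sided_ideal_zero[OF I] two_sided_ideal_zero[OF J] by force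
next
  fix x y assume "x \<in> set_plus I J" "y \<in> set_plus I J"
  then obtain a c a' c' where "x = a + c" "y = a' + c'" "a \<in> I" "c \<in> J" "a' \<in> I" "c' \<in> J"
    unfolding set_plus_def by blast
  moreover have "(a + c) + (a' + c') = (a + a') + (c + c')" by (simp add: algebra_simps)
  ultimately show "x + y \<in> set_plus I J"
    unfolding set_plus_def using two_sided_ideal_add[OF I] two_sided_ideal_add[OF J] by blast
next
  fix x assume "x \<in> set_plus I J"
  then show "- x \<in> set_plus I J"
    unfolding set_plus_def using two_sided_ideal_uminus[OF I] two_sided_ideal_uminus[OF J]
    by (force simp: add.commute)
next
  fix x r assume "x \<in> set_plus I J"
  then obtain a c where ac: "x = a + c" "a \<in> I" "c \<in> J" unfolding set_plus_def by blast
  then have "r * x = r * a + r * c" "x * r = a * r + c * r" by (simp_all add: algebra_simps)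
  then show "r * x \<in> set_plus I J" "x * r \<in> set_plus I J"
    unfolding set_plus_def
    using ac two_sided_ideal_mult_left[OF I] two_sided_ideal_mult_left[OF J]
      two_sided_ideal_mult_right[OF I] two_sided_ideal_mult_right[OF J]
    by blast+
qed

lemma two_sided_ideal_Union_chain:
  assumes "chain\<^sub>\<subseteq> M" and "M \<noteq> {}" and "\<And>I. I \<in> M \<Longrightarrow> two_sided_ideal I"
  shows "two_sided_ideal (\<Union>M)"
proof (rule two_sided_idealI)
  show "0 \<in> \<Union>M" using assms(2,3) two_sided_ideal_zero by blast
next
  fix x y assume "x \<in> \<Union>M" "y \<in> \<Union>M"
  then obtain I J where "x \<in> I" "y \<in> J" "I \<in> M" "J \<in> M" by blast
  with \<open>chain\<^sub>\<subseteq> M\<close> have "x \<in> I \<union> J" "y \<in> I \<union> J" "I \<union> J \<in> M"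
    unfolding chain_subset_def by (metis Un_absorb1 Un_absorb2 UnI1 UnI2)+
  then show "x + y \<in> \<Union>M" using assms(3) two_sided_ideal_add by blast
qed (use assms(3) two_sided_ideal_uminus two_sided_ideal_mult_left two_sided_ideal_mult_right in blast)+

lemma
  assumes "ore_set S"
  shows ore_set_one: "1 \<in> S"
    and ore_set_zero: "0 \<notin> S"
    and ore_set_mult: "s \<in> S \<Longrightarrow> t \<in> S \<Longrightarrow> s * t \<in> S"
    and ore_set_left: "s \<in> S \<Longrightarrow> \<exists>s'\<in>S. \<exists>r'. s' * r = r' * s"
    and ore_set_right: "s \<in> S \<Longrightarrow> \<exists>s'\<in>S. \<exists>r'. r * s' = s * r'"
  using assms by (auto simp: ore_set_def mult_closed_def)

lemma subset_ass_l_mod: "1 \<in> S \<Longrightarrow> b \<subseteq> ass_l_mod b S"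
  unfolding ass_l_mod_def by force

lemma subset_ass_r_mod: "1 \<in> S \<Longrightarrow> b \<subseteq> ass_r_mod b S"
  unfolding ass_r_mod_def by force

lemma two_sided_ideal_ass_l_mod:
  assumes S: "ore_set S" and b: "two_sided_ideal b"
  shows "two_sided_ideal (ass_l_mod b S)"
proof (rule two_sided_idealI)
  show "0 \<in> ass_l_mod b S"
    using subset_ass_l_mod[OF ore_set_one[OF S]] two_sided_ideal_zero[OF b] by blast
next
  fix x y assume "x \<in> ass_l_mod b S" "y \<in> ass_l_mod b S"
  then obtain s t where st: "s \<in> S" "s * x \<in> b" "t \<in> S" "t * y \<in> b"
    unfolding ass_l_mod_def by blast
  obtain s' r' where s': "s' \<in> S" "s' * s = r' * t" using ore_set_left[OF S \<open>t \<in> S\<close>] by blast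
  have "(s' * s) * (x + y) = s' * (s * x) + r' * (t * y)"
    by (simp add: distrib_left s'(2) flip: mult.assoc)
  also have "\<dots> \<in> b" using st b by (blast intro: two_sided_ideal_add two_sided_ideal_mult_left)
  finally show "x + y \<in> ass_l_mod b S"
    unfolding ass_l_mod_def using ore_set_mult[OF S s'(1) \<open>s \<in> S\<close>] by blast
next
  fix x assume "x \<in> ass_l_mod b S"
  then show "- x \<in> ass_l_mod b S"
    unfolding ass_l_mod_def using two_sided_ideal_uminus[OF b] by force
next
  fix x r assume "x \<in> ass_l_mod b S"
  then obtain s where s: "s \<in> S" "s * x \<in> b" unfolding ass_l_mod_def by blast
  obtain s' r' where s': "s' \<in> S" "s' * r = r' * s" using ore_set_left[OF S \<open>s \<in> S\<close>] by blast
  have "s' * (r * x) = r' * (s * x)" by (simp add: s'(2) flip: mult.assoc)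
  then have "s' * (r * x) \<in> b" using s two_sided_ideal_mult_left[OF b] by simp
  then show "r * x \<in> ass_l_mod b S" unfolding ass_l_mod_def using s'(1) by blast
  have "s * (x * r) \<in> b" using s two_sided_ideal_mult_right[OF b] by (simp flip: mult.assoc)
  then show "x * r \<in> ass_l_mod b S" unfolding ass_l_mod_def using s(1) by blast
qed

lemma two_sided_ideal_ass_r_mod:
  assumes S: "ore_set S" and b: "two_sided_ideal b"
  shows "two_sided_ideal (ass_r_mod b S)"
proof (rule two_sided_idealI)
  show "0 \<in> ass_r_mod b S"
    using subset_ass_r_mod[OF ore_set_one[OF S]] two_sided_ideal_zero[OF b] by blast
next
  fix x y assume "x \<in> ass_r_mod b S" "y \<in> ass_r_mod b S"
  then obtain s t where st: "s \<in> S" "x * s \<in> b" "t \<in> S" "y * t \<in> b"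
    unfolding ass_r_mod_def by blast
  obtain s' r' where s': "s' \<in> S" "t * s' = s * r'" using ore_set_right[OF S \<open>s \<in> S\<close>] by blast
  have "(x + y) * (t * s') = (x * s) * r' + (y * t) * s'"
    by (simp add: distrib_right s'(2) mult.assoc)
  also have "\<dots> \<in> b" using st b by (blast intro: two_sided_ideal_add two_sided_ideal_mult_right)
  finally show "x + y \<in> ass_r_mod b S"
    unfolding ass_r_mod_def using ore_set_mult[OF S \<open>t \<in> S\<close> s'(1)] by blast
next
  fix x assume "x \<in> ass_r_mod b S"
  then show "- x \<in> ass_r_mod b S"
    unfolding ass_r_mod_def using two_sided_ideal_uminus[OF b] by force
next
  fix x r assume "x \<in> ass_r_mod b S"
  then obtain s where s: "s \<in> S" "x * s \<in> b" unfolding ass_r_mod_def by blast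
  obtain s' r' where s': "s' \<in> S" "r * s' = s * r'" using ore_set_right[OF S \<open>s \<in> S\<close>] by blast
  have "(x * r) * s' = (x * s) * r'" by (simp add: s'(2) mult.assoc)
  then have "(x * r) * s' \<in> b" using s two_sided_ideal_mult_right[OF b] by simp
  then show "x * r \<in> ass_r_mod b S" unfolding ass_r_mod_def using s'(1) by blast
  have "(r * x) * s \<in> b" using s two_sided_ideal_mult_left[OF b] by (simp add: mult.assoc)
  then show "r * x \<in> ass_r_mod b S" unfolding ass_r_mod_def using s(1) by blast
qed

lemma p_succ_eq_set_plus:
  assumes S: "ore_set S" and b: "two_sided_ideal b"
  shows "p_succ S b = set_plus (ass_l_mod b S) (ass_r_mod b S)"
proof
  show "p_succ S b \<subseteq> set_plus (ass_l_mod b S) (ass_r_mod b S)"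
  proof
    fix x assume "x \<in> p_succ S b"
    then obtain a c where x: "x - (a + c) \<in> b" "a \<in> ass_l_mod b S" "c \<in> ass_r_mod b S"
      unfolding p_succ_def ass_l_mod_def ass_r_mod_def by blast
    have "x - (a + c) + a \<in> ass_l_mod b S"
      using x subset_ass_l_mod[OF ore_set_one[OF S]] two_sided_ideal_ass_l_mod[OF S b]
      by (blast intro: two_sided_ideal_add)
    moreover have "x = (x - (a + c) + a) + c" by simp
    ultimately show "x \<in> set_plus (ass_l_mod b S) (ass_r_mod b S)"
      unfolding set_plus_def using x(3) by blast
  qed
  show "set_plus (ass_l_mod b S) (ass_r_mod b S) \<subseteq> p_succ S b"
    unfolding set_plus_def p_succ_def ass_l_mod_def ass_r_mod_def
    using two_sided_ideal_zero[OF b] by force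
qed

lemma p1_eq_p_succ_zero: "p1 S = p_succ S {0}"
  unfolding p1_def p_succ_def set_plus_def ass_l_def ass_r_def
  by (auto simp: algebra_simps)

lemma two_sided_ideal_p_succ:
  "ore_set S \<Longrightarrow> two_sided_ideal b \<Longrightarrow> two_sided_ideal (p_succ S b)"
  by (simp add: p_succ_eq_set_plus two_sided_ideal_set_plus
      two_sided_ideal_ass_l_mod two_sided_ideal_ass_r_mod)

lemma p_succ_disjoint:
  assumes S: "ore_set S" and b: "two_sided_ideal b" and disj: "S \<inter> b = {}"
  shows "S \<inter> p_succ S b = {}"
proof (rule ccontr)
  assume "S \<inter> p_succ S b \<noteq> {}"
  then obtain u a c s t where u: "u \<in> S" "u - (a + c) \<in> b"
    and st: "s \<in> S" "s * a \<in> b" "t \<in> S" "c * t \<in> b"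
    unfolding p_succ_def by blast
  have "s * u * t = s * (u - (a + c)) * t + (s * a) * t + s * (c * t)"
    by (simp add: algebra_simps)
  also have "\<dots> \<in> b"
    using u st by (blast intro: two_sided_ideal_add[OF b] two_sided_ideal_mult_left[OF b]
        two_sided_ideal_mult_right[OF b])
  finally show False
    using disj ore_set_mult[OF S ore_set_mult[OF S st(1) u(1)] st(3)] by blast
qed

lemma subset_p_succ: "S \<noteq> {} \<Longrightarrow> 0 \<in> b \<Longrightarrow> b \<subseteq> p_succ S b"
  unfolding p_succ_def by (auto intro!: exI[of _ 0])

lemma ass_l_mod_subset_p_succ:
  assumes "S \<noteq> {}" and "0 \<in> p"
  shows "ass_l_mod p S \<subseteq> p_succ S p"
proof
  fix r assume "r \<in> ass_l_mod p S"
  then obtain s where "s \<in> S" "s * r \<in> p" unfolding ass_l_mod_def by blast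
  moreover obtain t where "t \<in> S" using assms(1) by blast
  moreover have "r - (r + 0) \<in> p" "0 * t \<in> p" using assms(2) by simp_all
  ultimately show "r \<in> p_succ S p" unfolding p_succ_def by blast
qed

lemma ass_r_mod_subset_p_succ:
  assumes "S \<noteq> {}" and "0 \<in> p"
  shows "ass_r_mod p S \<subseteq> p_succ S p"
proof
  fix r assume "r \<in> ass_r_mod p S"
  then obtain t where "t \<in> S" "r * t \<in> p" unfolding ass_r_mod_def by blast
  moreover obtain s where "s \<in> S" using assms(1) by blast
  moreover have "r - (0 + r) \<in> p" "s * 0 \<in> p" using assms(2) by simp_all
  ultimately show "r \<in> p_succ S p" unfolding p_succ_def by blast
qed

lemma p_succ_subset:
  assumes b: "two_sided_ideal b" and "ass_l_mod b S \<subseteq> b" and "ass_r_mod b S \<subseteq> b" and "p \<subseteq> b"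
  shows "p_succ S p \<subseteq> b"
proof
  fix x assume "x \<in> p_succ S p"
  then obtain a c s t where x: "x - (a + c) \<in> p" "s \<in> S" "s * a \<in> p" "t \<in> S" "c * t \<in> p"
    unfolding p_succ_def by blast
  then have "a \<in> b" "c \<in> b" "x - (a + c) \<in> b"
    using assms(2-4) unfolding ass_l_mod_def ass_r_mod_def by blast+
  then have "x - (a + c) + (a + c) \<in> b" using b by (blast intro: two_sided_ideal_add)
  then show "x \<in> b" by simp
qed

lemma zero_mem_p_stages:
  assumes "S \<noteq> {}" and "p \<in> p_stages S"
  shows "0 \<in> p"
  using assms(2)
proof induction
  case base
  show ?case unfolding p1_eq_p_succ_zero using subset_p_succ[OF assms(1)] by blast
next
  case (succ p)
  then show ?case using subset_p_succ[OF assms(1)] by blast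
qed auto

lemma chain_p_stages:
  assumes "S \<noteq> {}"
  shows "chain\<^sub>\<subseteq> (p_stages S)"
proof -
  \<comment> \<open>the library tower needs a map inflationary on all sets; \<open>f\<close> agrees with the
    successor step on the stages, which contain \<open>0\<close>\<close>
  define f where "f p = p \<union> p_succ S p" for p :: "'a set"
  interpret bourbaki_witt_fixpoint Sup "{(x, y). x \<le> y}" f
    by (rule bourbaki_witt_fixpoint_complete_latticeI) (simp add: f_def)
  have chain: "iterates_above (p1 S) \<in> Chains {(x, y). x \<le> y}"
    by (rule chain_iterates_above) (auto simp: Field_def)
  have "p \<in> iterates_above (p1 S)" if "p \<in> p_stages S" for p
    using that
  proof (induction rule: p_stages.induct)
    case base
    then show ?case by (rule iterates_above.base)
  next
    case (succ p)
    have "f p = p_succ S p"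
      using subset_p_succ[OF assms zero_mem_p_stages[OF assms succ.hyps]] by (auto simp: f_def)
    with succ.IH show ?case by (metis iterates_above.step)
  next
    case (lim M)
    then have "M \<in> Chains {(x, y). x \<le> y}" using in_Chains_subset[OF chain] by blast
    with lim show ?case by (auto intro: iterates_above.Sup)
  qed
  moreover have "\<forall>A\<in>iterates_above (p1 S). \<forall>B\<in>iterates_above (p1 S). A \<subseteq> B \<or> B \<subseteq> A"
    using chain by (simp add: Chains_def)
  ultimately show ?thesis unfolding chain_subset_def by blast
qed

lemma p_stages_ideal_disjoint:
  assumes S: "ore_set S" and "p \<in> p_stages S"
  shows "two_sided_ideal p \<and> S \<inter> p = {}"
  using \<open>p \<in> p_stages S\<close>
proof (induction rule: p_stages.induct)
  case base
  have "S \<inter> {0} = {}" using ore_set_zero[OF S] by blast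
  then show ?case
    unfolding p1_eq_p_succ_zero
    using two_sided_ideal_p_succ[OF S two_sided_ideal_singleton_zero]
      p_succ_disjoint[OF S two_sided_ideal_singleton_zero] by blast
next
  case (succ p)
  then show ?case using two_sided_ideal_p_succ[OF S] p_succ_disjoint[OF S] by blast
next
  case (lim M)
  have "S \<noteq> {}" using ore_set_one[OF S] by blast
  from lim.IH have M: "M \<subseteq> p_stages S" "\<And>I. I \<in> M \<Longrightarrow> two_sided_ideal I \<and> S \<inter> I = {}"
    by auto
  then have "chain\<^sub>\<subseteq> M"
    using chain_p_stages[OF \<open>S \<noteq> {}\<close>] unfolding chain_subset_def by blast
  moreover have "\<And>I. I \<in> M \<Longrightarrow> two_sided_ideal I" "S \<inter> \<Union>M = {}"
    using M(2) by auto
  ultimately show ?case using two_sided_ideal_Union_chain[OF _ \<open>M \<noteq> {}\<close>] by blast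
qed

lemma two_sided_ideal_pS:
  assumes S: "ore_set S"
  shows "two_sided_ideal (pS S)"
proof -
  have "S \<noteq> {}" using ore_set_one[OF S] by blast
  moreover have "p_stages S \<noteq> {}" using p_stages.base by blast
  ultimately show ?thesis
    unfolding pS_def
    using two_sided_ideal_Union_chain chain_p_stages p_stages_ideal_disjoint[OF S] by blast
qed

lemma pS_disjoint: "ore_set S \<Longrightarrow> S \<inter> pS S = {}"
  unfolding pS_def using p_stages_ideal_disjoint by blast

lemma ass_l_mod_pS_subset:
  assumes "S \<noteq> {}"
  shows "ass_l_mod (pS S) S \<subseteq> pS S"
proof
  fix r assume "r \<in> ass_l_mod (pS S) S"
  then obtain p where p: "p \<in> p_stages S" "r \<in> ass_l_mod p S"
    unfolding ass_l_mod_def pS_def by blast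
  then have "r \<in> p_succ S p"
    using ass_l_mod_subset_p_succ[OF assms zero_mem_p_stages[OF assms p(1)]] by blast
  then show "r \<in> pS S" unfolding pS_def using p_stages.succ[OF p(1)] by blast
qed

lemma ass_r_mod_pS_subset:
  assumes "S \<noteq> {}"
  shows "ass_r_mod (pS S) S \<subseteq> pS S"
proof
  fix r assume "r \<in> ass_r_mod (pS S) S"
  then obtain p where p: "p \<in> p_stages S" "r \<in> ass_r_mod p S"
    unfolding ass_r_mod_def pS_def by blast
  then have "r \<in> p_succ S p"
    using ass_r_mod_subset_p_succ[OF assms zero_mem_p_stages[OF assms p(1)]] by blast
  then show "r \<in> pS S" unfolding pS_def using p_stages.succ[OF p(1)] by blast
qed

lemma
  assumes "b \<in> JRS S"
  shows JRS_two_sided_ideal: "two_sided_ideal b"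
    and JRS_ass_l_mod_subset: "ass_l_mod b S \<subseteq> b"
    and JRS_ass_r_mod_subset: "ass_r_mod b S \<subseteq> b"
proof -
  have den: "denominator_set_mod b S" and ass: "ass_mod_zero b S"
    using assms unfolding JRS_def by blast+
  show "two_sided_ideal b" using assms unfolding JRS_def by blast
  show l: "ass_l_mod b S \<subseteq> b" using ass unfolding ass_mod_zero_def ass_l_mod_def by blast
  show "ass_r_mod b S \<subseteq> b"
  proof
    fix r assume "r \<in> ass_r_mod b S"
    then obtain s where "s \<in> S" "r * s \<in> b" unfolding ass_r_mod_def by blast
    moreover have "\<forall>r. \<forall>s\<in>S. r * s \<in> b \<longrightarrow> (\<exists>t\<in>S. t * r \<in> b)"
      using den by (simp add: denominator_set_mod_def)
    ultimately obtain t where "t \<in> S" "t * r \<in> b" by blast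
    then show "r \<in> b" using l unfolding ass_l_mod_def by blast
  qed
qed

lemma JRS_memI:
  assumes S: "ore_set S" and b: "two_sided_ideal b" and disj: "S \<inter> b = {}"
    and l: "ass_l_mod b S \<subseteq> b" and r: "ass_r_mod b S \<subseteq> b"
  shows "b \<in> JRS S"
proof -
  have "\<exists>s'\<in>S. \<exists>r'. s' * r - r' * s \<in> b" "\<exists>s'\<in>S. \<exists>r'. r * s' - s * r' \<in> b"
    if s: "s \<in> S" for r s
  proof -
    obtain s\<^sub>1 r\<^sub>1 where "s\<^sub>1 \<in> S" "s\<^sub>1 * r = r\<^sub>1 * s" using ore_set_left[OF S s] by blast
    moreover have "s\<^sub>1 * r - r\<^sub>1 * s \<in> b" using two_sided_ideal_zero[OF b] \<open>s\<^sub>1 * r = r\<^sub>1 * s\<close> by simp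
    ultimately show "\<exists>s'\<in>S. \<exists>r'. s' * r - r' * s \<in> b" by blast
    obtain s\<^sub>2 r\<^sub>2 where "s\<^sub>2 \<in> S" "r * s\<^sub>2 = s * r\<^sub>2" using ore_set_right[OF S s] by blast
    moreover have "r * s\<^sub>2 - s * r\<^sub>2 \<in> b" using two_sided_ideal_zero[OF b] \<open>r * s\<^sub>2 = s * r\<^sub>2\<close> by simp
    ultimately show "\<exists>s'\<in>S. \<exists>r'. r * s' - s * r' \<in> b" by blast
  qed
  then have "ore_set_mod b S"
    unfolding ore_set_mod_def using disj ore_set_one[OF S] ore_set_mult[OF S] by blast
  moreover have "1 * r \<in> b" if "s \<in> S" "r * s \<in> b" for r s
    using that r unfolding ass_r_mod_def by auto
  moreover have "r * 1 \<in> b" if "s \<in> S" "s * r \<in> b" for r s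
    using that l unfolding ass_l_mod_def by auto
  ultimately have "denominator_set_mod b S"
    unfolding denominator_set_mod_def using ore_set_one[OF S] by blast
  moreover have "ass_mod_zero b S" using l unfolding ass_mod_zero_def ass_l_mod_def by blast
  ultimately show "b \<in> JRS S" unfolding JRS_def using b by blast
qed

lemma pS_mem_JRS:
  assumes S: "ore_set S"
  shows "pS S \<in> JRS S"
proof -
  have "S \<noteq> {}" using ore_set_one[OF S] by blast
  then show ?thesis
    using JRS_memI[OF S two_sided_ideal_pS[OF S] pS_disjoint[OF S]]
      ass_l_mod_pS_subset ass_r_mod_pS_subset by blast
qed

lemma pS_least:
  assumes "b \<in> JRS S"
  shows "pS S \<subseteq> b"
proof -
  note b = JRS_two_sided_ideal[OF \<open>b \<in> JRS S\<close>]
    and l = JRS_ass_l_mod_subset[OF \<open>b \<in> JRS S\<close>]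
    and r = JRS_ass_r_mod_subset[OF \<open>b \<in> JRS S\<close>]
  have "p \<subseteq> b" if "p \<in> p_stages S" for p
    using that
  proof (induction rule: p_stages.induct)
    case base
    show ?case
      unfolding p1_eq_p_succ_zero using p_succ_subset[OF b l r] two_sided_ideal_zero[OF b] by blast
  next
    case (succ p)
    then show ?case using p_succ_subset[OF b l r] by blast
  qed blast
  then show ?thesis unfolding pS_def by blast
qed

lemma ass_mem_JRS:
  assumes D: "denominator_set S"
  shows "ass S \<in> JRS S"
proof -
  have S: "ore_set S" using D unfolding denominator_set_def by blast
  have ass_eq: "ass S = ass_l_mod {0} S" unfolding ass_def ass_l_mod_def by simp
  have "two_sided_ideal (ass S)"
    unfolding ass_eq using two_sided_ideal_ass_l_mod[OF S two_sided_ideal_singleton_zero] .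
  moreover have "S \<inter> ass S = {}"
    using ore_set_mult[OF S] ore_set_zero[OF S] unfolding ass_def by fastforce
  moreover have "ass_l_mod (ass S) S \<subseteq> ass S"
  proof
    fix r assume "r \<in> ass_l_mod (ass S) S"
    then obtain s t where "s \<in> S" "t \<in> S" "(t * s) * r = 0"
      unfolding ass_l_mod_def ass_def by (auto simp: mult.assoc)
    then show "r \<in> ass S" unfolding ass_def using ore_set_mult[OF S] by blast
  qed
  moreover have "ass_r_mod (ass S) S \<subseteq> ass S"
  proof
    fix r assume "r \<in> ass_r_mod (ass S) S"
    then obtain s t where "s \<in> S" "t \<in> S" "(t * r) * s = 0"
      unfolding ass_r_mod_def ass_def by (auto simp: mult.assoc)
    \<comment> \<open>right cancellation of \<open>s\<close> is exactly where the denominator condition enters\<close>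
    then obtain t' where "t' \<in> S" "(t' * t) * r = 0"
      using D unfolding denominator_set_def by (metis mult.assoc)
    then show "r \<in> ass S" unfolding ass_def using ore_set_mult[OF S] \<open>t \<in> S\<close> by blast
  qed
  ultimately show ?thesis by (rule JRS_memI[OF S])
qed

lemma ass_subset_pS:
  assumes "S \<noteq> {}"
  shows "ass S \<subseteq> pS S"
proof
  fix r assume "r \<in> ass S"
  moreover obtain t where "t \<in> S" using assms by blast
  ultimately have "r \<in> ass_l S" "0 \<in> ass_r S" unfolding ass_def ass_l_def ass_r_def by auto
  then have "r + 0 \<in> p1 S" unfolding p1_def set_plus_def by blast
  then show "r \<in> pS S" unfolding pS_def using p_stages.base by auto
qed

theorem theorem4p15:
  fixes S :: "'a::ring_1 set"
  assumes "ore_set S"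
  shows "JRS S \<noteq> {} \<and>
         (pS S \<in> JRS S \<and> (\<forall>b\<in>JRS S. pS S \<subseteq> b)) \<and>
         (\<forall>a. denominator_set S \<and> ass S = a \<longrightarrow> pS S = a)"
proof -
  have "pS S \<in> JRS S" using pS_mem_JRS[OF assms] .
  moreover have p_least: "\<forall>b\<in>JRS S. pS S \<subseteq> b" using pS_least by blast
  moreover have "pS S = ass S" if "denominator_set S"
    using p_least ass_mem_JRS[OF that] ass_subset_pS ore_set_one[OF assms] by blast
  ultimately show ?thesis by blast
qed

end
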